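(* For any history $\mathcal{F}_{t-1}$, conditioned on the event $E^{\widetilde f}(t)$, for all $\mathbf{x}\in\mathcal{X}$, \[ \mathbb{P}\big(\widetilde f_t(\mathbf{x})+\epsilon_{m,t}>f(\mathbf{x})\mid\mathcal{F}_{t-1}\big)\ge p,\qquad p=\frac{1}{4e\sqrt\pi}. \]
   Context: $\mathcal{X}$ finite subset of the unit ball of $\mathbb{R}^d$; $f\sim\mathcal{GP}(0,k)$, $k$ the exact NTK with $k\le K_0$, $|f|\le B'$; noise $\mathcal{N}(0,\sigma^2)$; $\delta\in(0,1)$, horizon $T$. $\widetilde k$ is the empirical NTK (gradient inner product of a network with $L+1$ layers at initialization), with $|\widetilde k-k|\le(L+1)\varepsilon$ on $\mathcal{X}\times\mathcal{X}$, $(L+1)\varepsilon\le1$, $\sigma^2\le1$, $\hat K_0=\max\{1,K_0\}$. $\beta_t=2\log(2\pi^2t^2|\mathcal{X}|/(3\delta))$. Queries indexed sequentially; $\mathrm{fb}[t]$ is the largest index observed when $\mathbf{x}_t$ is chosen ($t-\mathrm{fb}[t]\le B$); $\mathcal{F}_{t-1}$ is the history of observed inputs/outputs and pending inputs. $\widetilde\mu_{\mathrm{fb}[t]},\widetilde\sigma^2_{\mathrm{fb}[t]}$: GP posterior mean/covariance with kernel $\widetilde k$ given observations $1,\dots,\mathrm{fb}[t]$; given $\mathcal{F}_{t-1}$, $\widetilde f_t\sim\mathcal{GP}(\widetilde\mu_{\mathrm{fb}[t]},\beta_t^2\widetilde\sigma^2_{\mathrm{fb}[t]})$. $\epsilon_{m,t}=2\hat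 K_0\frac{t^2(L+1)\varepsilon}{\sigma^4}(B'+\sigma\sqrt{2\log(4T/\delta)})+\beta_t\sqrt{(L+1)\varepsilon(1+4\hat K_0^2t^2/\sigma^4)}$. $E^{\widetilde f}(t)$ is the event $|\widetilde\mu_{\mathrm{fb}[t]}(\mathbf{x})-f(\mathbf{x})|\le\beta_t\widetilde\sigma_{\mathrm{fb}[t]}(\mathbf{x})+\epsilon_{m,t}$ for all $\mathbf{x}$. *)

theory Defs
  imports "HOL-Probability.Probability"
begin

definition beta_t :: "nat \<Rightarrow> nat \<Rightarrow> real \<Rightarrow> real" where
  "beta_t t cardX \<delta> = 2 * ln (2 * pi^2 * real t^2 * real cardX / (3 * \<delta>))"

text \<open>Approximation slack epsilon_{m,t}; Lp1eps stands for (L+1)*epsilon,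
  K0hat = max 1 K0, Bp = B', sig = sigma.\<close>
definition eps_mt :: "nat \<Rightarrow> nat \<Rightarrow> nat \<Rightarrow> real \<Rightarrow> real \<Rightarrow> real \<Rightarrow> real \<Rightarrow> real \<Rightarrow> real" where
  "eps_mt t T cardX \<delta> Lp1eps K0hat Bp sig =
     2 * K0hat * (real t^2 * Lp1eps / sig^4) * (Bp + sig * sqrt (2 * ln (4 * real T / \<delta>)))
     + beta_t t cardX \<delta> * sqrt (Lp1eps * (1 + 4 * K0hat^2 * real t^2 / sig^4))"

end

theory Submission imports Defs begin

text \<open>On the event \<open>E\<close>, the threshold \<open>f x - \<epsilon>\<^sub>m\<^sub>,\<^sub>t\<close> lies at most one posterior standard
  deviation \<open>\<beta>\<^sub>t \<sigma>(x)\<close> above the mean \<open>\<mu>(x)\<close> of the Gaussian \<open>f\<^sub>t(x)\<close>. A Gaussian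
  \<open>N(m, s\<^sup>2)\<close> exceeds \<open>m + s\<close> with probability at least \<open>e\<^sup>-\<^sup>2 / \<surd>(2\<pi>)\<close>, since its density
  is at least \<open>e\<^sup>-\<^sup>2 / (\<surd>(2\<pi>) s)\<close> on \<open>(m + s, m + 2s]\<close>; and \<open>e\<^sup>-\<^sup>2 / \<surd>(2\<pi>) \<ge> 1 / (4 e \<surd>\<pi>)\<close>
  because \<open>\<surd>2 e \<le> 4\<close>.\<close>

lemma normal_density_lower_bound:
  fixes m s x r :: real
  assumes "0 < s" and "\<bar>x - m\<bar> \<le> r"
  shows "exp (- r\<^sup>2 / (2 * s\<^sup>2)) / (sqrt (2 * pi) * s) \<le> normal_density m s x"
proof -
  have "(x - m)\<^sup>2 \<le> r\<^sup>2"
    using assms(2) by (metis abs_ge_zero power2_abs power_mono)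
  then have "- r\<^sup>2 / (2 * s\<^sup>2) \<le> - (x - m)\<^sup>2 / (2 * s\<^sup>2)"
    by (simp add: divide_right_mono)
  moreover have "sqrt (2 * pi * s\<^sup>2) = sqrt (2 * pi) * s"
    using assms(1) by (simp add: real_sqrt_mult)
  ultimately show ?thesis
    using assms(1) by (simp add: normal_density_def divide_right_mono)
qed

lemma normal_upper_tail_lower_bound:
  fixes M :: "'w measure" and Y :: "'w \<Rightarrow> real" and m s a :: real
  assumes "prob_space M" and Y: "distributed M lborel Y (normal_density m s)"
    and s: "0 < s" and a: "0 \<le> a"
  shows "exp (- (a + 1)\<^sup>2 / 2) / sqrt (2 * pi) \<le> measure M {w \<in> space M. m + a * s < Y w}"
proof -
  interpret prob_space M by fact
  have [measurable]: "Y \<in> borel_measurable M"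
    using Y by (simp add: distributed_def)
  define I where "I = {m + a * s <.. m + (a + 1) * s}"
  define k where "k = exp (- ((a + 1) * s)\<^sup>2 / (2 * s\<^sup>2)) / (sqrt (2 * pi) * s)"
  have k_nonneg: "0 \<le> k"
    using s by (simp add: k_def)
  have "0 \<le> a * s"
    using s a by simp
  then have k_le: "k \<le> normal_density m s x" if "x \<in> I" for x
    unfolding k_def using that s
    by (intro normal_density_lower_bound) (auto simp: I_def algebra_simps)
  have "ennreal (k * s) = (\<integral>\<^sup>+x. ennreal k * indicator I x \<partial>lborel)"
    using s k_nonneg by (simp add: I_def nn_integral_cmult_indicator ennreal_mult algebra_simps)
  also have "\<dots> \<le> (\<integral>\<^sup>+x. ennreal (normal_density m s x) * indicator I x \<partial>lborel)"
    by (intro nn_integral_mono) (auto simp: indicator_def k_le)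
  also have "\<dots> = emeasure M (Y -` I \<inter> space M)"
    by (rule distributed_emeasure[OF Y, symmetric]) (simp add: I_def)
  finally have "k * s \<le> measure M (Y -` I \<inter> space M)"
    by (simp add: emeasure_eq_measure)
  also have "\<dots> \<le> measure M {w \<in> space M. m + a * s < Y w}"
    by (intro finite_measure_mono) (auto simp: I_def)
  finally show ?thesis
    using s by (simp add: k_def power_mult_distrib)
qed

lemma inverse_4_e_sqrt_pi_le: "1 / (4 * exp 1 * sqrt pi) \<le> exp (- 2) / sqrt (2 * pi)"
proof -
  have "sqrt 2 \<le> (145/100 :: real)"
    by (rule real_le_lsqrt) (auto simp: power2_eq_square)
  then have "sqrt 2 * exp 1 \<le> (145/100) * (272/100 :: real)"
    using e_less_272 by (intro mult_mono) auto
  then have "sqrt 2 * exp 1 \<le> 4"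
    by simp
  then have "1 / (4 * exp 1 * sqrt pi) \<le> 1 / (sqrt 2 * exp 1 * exp 1 * sqrt pi)"
    by (intro divide_left_mono mult_right_mono) auto
  also have "\<dots> = exp (- 2) / sqrt (2 * pi)"
    by (simp add: real_sqrt_mult exp_minus field_simps power2_eq_square flip: exp_add)
  finally show ?thesis .
qed

lemma beta_t_pos:
  assumes "1 \<le> t" and "0 < cardX" and "0 < \<delta>" and "\<delta> \<le> 1"
  shows "0 < beta_t t cardX \<delta>"
proof -
  have "3 * 3 < pi * pi"
    using pi_gt3 by (intro mult_strict_mono) auto
  then have "1 < 2 * pi\<^sup>2 / 3"
    by (simp add: power2_eq_square)
  also have "\<dots> \<le> 2 * pi\<^sup>2 / (3 * \<delta>)"
    using assms(3,4) by (intro divide_left_mono) auto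
  also have "\<dots> \<le> 2 * pi\<^sup>2 / (3 * \<delta>) * (real t ^ 2 * real cardX)"
  proof -
    have "1 * 1 \<le> real t ^ 2 * real cardX"
      using assms(1,2) by (intro mult_mono one_le_power) auto
    then show ?thesis
      using mult_left_mono[of 1 _ "2 * pi\<^sup>2 / (3 * \<delta>)"] assms(3) by simp
  qed
  finally show ?thesis
    unfolding beta_t_def by (simp add: field_simps)
qed

theorem lemma14:
  fixes X :: "(real^'d) set"
    and f :: "real^'d \<Rightarrow> real"
    and mu_tilde sigma_tilde :: "real^'d \<Rightarrow> real"
    and M :: "'w measure"
    and f_tilde :: "real^'d \<Rightarrow> 'w \<Rightarrow> real"
    and t T L :: nat
    and \<delta> \<epsilon> \<sigma> K0 Bp :: real
  assumes X_fin: "finite X" and X_ball: "\<forall>x\<in>X. norm x \<le> 1"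
    and f_bd: "\<forall>x\<in>X. \<bar>f x\<bar> \<le> Bp"
    and delta: "0 < \<delta>" "\<delta> < 1"
    and t: "1 \<le> t" "t \<le> T"
    and sig: "0 < \<sigma>" "\<sigma>^2 \<le> 1"
    and eps: "0 \<le> \<epsilon>" "(real L + 1) * \<epsilon> \<le> 1"
    and K0: "0 < K0"
    and sigma_pos: "\<forall>x\<in>X. 0 < sigma_tilde x"
    \<comment> \<open>M is the conditional probability given the history F_{t-1}; under it,
        f_tilde_t(x) ~ N(mu_tilde_fb[t](x), beta_t^2 sigma_tilde_fb[t]^2(x))\<close>
    and M: "prob_space M"
    and post: "\<forall>x\<in>X. distributed M lborel (f_tilde x)
                 (normal_density (mu_tilde x) (beta_t t (card X) \<delta> * sigma_tilde x))"
    \<comment> \<open>the event E^{f_tilde}(t)\<close>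
    and E: "\<forall>x\<in>X. \<bar>mu_tilde x - f x\<bar> \<le> beta_t t (card X) \<delta> * sigma_tilde x
                 + eps_mt t T (card X) \<delta> ((real L + 1) * \<epsilon>) (max 1 K0) Bp \<sigma>"
  shows "\<forall>x\<in>X. measure M {w \<in> space M.
            f_tilde x w + eps_mt t T (card X) \<delta> ((real L + 1) * \<epsilon>) (max 1 K0) Bp \<sigma> > f x}
          \<ge> 1 / (4 * exp 1 * sqrt pi)"
proof
  fix x assume x: "x \<in> X"
  define b where "b = beta_t t (card X) \<delta>"
  define e where "e = eps_mt t T (card X) \<delta> ((real L + 1) * \<epsilon>) (max 1 K0) Bp \<sigma>"
  interpret prob_space M by (rule M)
  have [measurable]: "f_tilde x \<in> borel_measurable M"
    using post x by (auto simp: distributed_def)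
  have "0 < b"
    unfolding b_def using t delta X_fin x by (intro beta_t_pos) (auto simp: card_gt_0_iff)
  then have sd_pos: "0 < b * sigma_tilde x"
    using sigma_pos x by simp
  have "1 / (4 * exp 1 * sqrt pi) \<le> exp (- (1 + 1)\<^sup>2 / 2) / sqrt (2 * pi)"
    using inverse_4_e_sqrt_pi_le by simp
  also have "\<dots> \<le> measure M {w \<in> space M. mu_tilde x + 1 * (b * sigma_tilde x) < f_tilde x w}"
    using M post x sd_pos unfolding b_def by (intro normal_upper_tail_lower_bound) auto
  also have "\<dots> \<le> measure M {w \<in> space M. f_tilde x w + e > f x}"
    using E x by (intro finite_measure_mono) (auto simp: b_def e_def)
  finally show "measure M {w \<in> space M.
            f_tilde x w + eps_mt t T (card X) \<delta> ((real L + 1) * \<epsilon>) (max 1 K0) Bp \<sigma> > f x}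
          \<ge> 1 / (4 * exp 1 * sqrt pi)"
    unfolding e_def .
qed

end
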